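(* Let $u:\mathbb{Z}^2\to\mathbb{C}$ be the centers of a square-grid circle pattern with all face variables nonzero. Let $X=X^{(b)}(u)$ and $X'=X^{(w)}(M_b(u))$. Then $$X'_{m,n}=\begin{cases}X_{m,n}^{-1}&(m,n)\text{ black},\\ X_{m,n}\dfrac{(1+X_{m,n+1})(1+X_{m,n-1})}{(1+X_{m+1,n}^{-1})(1+X_{m-1,n}^{-1})}&(m,n)\text{ white}.\end{cases}$$ In particular $X>0$ everywhere if and only if $X'>0$ everywhere. The same statement holds for the white mutation with the roles of black and white (and of $X^{(b)},X^{(w)}$) exchanged.
   Context: Faces of the square grid are indexed by $(m,n)\in\mathbb{Z}^2$; face $(m,n)$ is black if $m+n$ is even, white otherwise; a circle pattern assigns to each face a circle with center $u_{m,n}$ such that the four corners of each face lie on its circle. Conventions: for $u=u_{m,n}$, $X^{(b)}_{m,n}=-\frac{(u_{m+1,n}-u)(u_{m-1,n}-u)}{(u_{m,n+1}-u)(u_{m,n-1}-u)}$ if $(m,n)$ is black and $X^{(b)}_{m,n}=-\frac{(u_{m,n+1}-u)(u_{m,n-1}-u)}{(u_{m+1,n}-u)(u_{m-1,n}-u)}$ if $(m,n)$ is white; $X^{(w)}=1/X^{(b)}$. The central move at face $(m,n)$ replaces $u_{m,n}$ by the root $\tilde u\neq u_{m,n}$ of $\frac{(u_{m+1,n}-z)(u_{m-1,n}-z)}{(u_{m,n+1}-z)(u_{m,n-1}-z)}=\frac{(u_{m+1,n}-u_{m,n})(u_{m-1,n}-u_{m,n})}{(u_{m,n+1}-u_{m,n})(u_{m,n-1}-u_{m,n})}$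 (double root: $\tilde u=u_{m,n}$). The black mutation $M_b$ applies the central move simultaneously to all black faces (white centers unchanged); the white mutation $M_w$ likewise for white faces. Miquel dynamics alternates $M_b$ and $M_w$. *)

theory Defs
  imports "HOL-Analysis.Analysis" "HOL-Library.Complex_Order"
begin

definition black_face :: "int \<Rightarrow> int \<Rightarrow> bool" where
  "black_face m n \<longleftrightarrow> even (m + n)"

text \<open>Vertices of the grid are also indexed by int x int; face (m,n) has corners
  (m,n), (m+1,n), (m,n+1), (m+1,n+1).\<close>

definition circle_pattern :: "(int \<Rightarrow> int \<Rightarrow> complex) \<Rightarrow> bool" where
  "circle_pattern u \<longleftrightarrow> (\<exists>p :: int \<Rightarrow> int \<Rightarrow> complex. \<forall>m n.
      cmod (p (m+1) n - u m n) = cmod (p m n - u m n) \<and>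
      cmod (p m (n+1) - u m n) = cmod (p m n - u m n) \<and>
      cmod (p (m+1) (n+1) - u m n) = cmod (p m n - u m n))"

definition Xb :: "(int \<Rightarrow> int \<Rightarrow> complex) \<Rightarrow> int \<Rightarrow> int \<Rightarrow> complex" where
  "Xb u m n =
     (if black_face m n then
        - ((u (m+1) n - u m n) * (u (m-1) n - u m n)) / ((u m (n+1) - u m n) * (u m (n-1) - u m n))
      else
        - ((u m (n+1) - u m n) * (u m (n-1) - u m n)) / ((u (m+1) n - u m n) * (u (m-1) n - u m n)))"

definition Xw :: "(int \<Rightarrow> int \<Rightarrow> complex) \<Rightarrow> int \<Rightarrow> int \<Rightarrow> complex" where
  "Xw u m n = 1 / Xb u m n"

definition move_ratio :: "(int \<Rightarrow> int \<Rightarrow> complex) \<Rightarrow> int \<Rightarrow> int \<Rightarrow> complex \<Rightarrow> complex" where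
  "move_ratio u m n z =
     ((u (m+1) n - z) * (u (m-1) n - z)) / ((u m (n+1) - z) * (u m (n-1) - z))"

text \<open>Central move at face (m,n): w is the root of
  move_ratio u m n z = move_ratio u m n (u m n) other than u m n, where, clearing denominators,
  the equation is the quadratic
  (a-z)(b-z)(d-u)(e-u) - (a-u)(b-u)(d-z)(e-z) = 0; "the other root" means this quadratic
  is genuinely of degree 2 and factors as k(z - u)(z - w) (w = u exactly for a double root).\<close>

definition central_move :: "(int \<Rightarrow> int \<Rightarrow> complex) \<Rightarrow> int \<Rightarrow> int \<Rightarrow> complex \<Rightarrow> bool" where
  "central_move u m n w \<longleftrightarrow>
     move_ratio u m n w = move_ratio u m n (u m n) \<and>
     (\<exists>k. k \<noteq> 0 \<and> (\<forall>z.
        (u (m+1) n - z) * (u (m-1) n - z) * ((u m (n+1) - u m n) * (u m (n-1) - u m n))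
        - ((u (m+1) n - u m n) * (u (m-1) n - u m n)) * ((u m (n+1) - z) * (u m (n-1) - z))
        = k * (z - u m n) * (z - w)))"

definition black_mutation :: "(int \<Rightarrow> int \<Rightarrow> complex) \<Rightarrow> (int \<Rightarrow> int \<Rightarrow> complex) \<Rightarrow> bool" where
  "black_mutation u v \<longleftrightarrow>
     (\<forall>m n. black_face m n \<longrightarrow> central_move u m n (v m n)) \<and>
     (\<forall>m n. \<not> black_face m n \<longrightarrow> v m n = u m n)"

definition white_mutation :: "(int \<Rightarrow> int \<Rightarrow> complex) \<Rightarrow> (int \<Rightarrow> int \<Rightarrow> complex) \<Rightarrow> bool" where
  "white_mutation u v \<longleftrightarrow>
     (\<forall>m n. \<not> black_face m n \<longrightarrow> central_move u m n (v m n)) \<and>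
     (\<forall>m n. black_face m n \<longrightarrow> v m n = u m n)"

end

theory Submission
  imports Defs
begin

text \<open>
  Clearing denominators, the central move at a face f with centre c_f and face ratio X_f
  says that the quadratic h(z) + X_f v(z), built from the products h, v of the differences to
  the horizontal and vertical neighbours, factors as (1 + X_f)(z - c_f)(z - w), w the new
  centre. At a moved face the ratio only involves unmoved neighbours and takes the same value
  at both roots, so the face ratio is unchanged and, read in the other colour convention, the
  face variable is inverted. At a fixed face with centre c, each neighbouring face
  has c as a root of h or of v, so evaluating its factorization at c expresses c - w through its
  face ratio and the two diagonal centres adjacent to both; multiplying the four expressions the
  diagonal centres cancel and the stated formula remains. Positivity passes through the formula
  in both directions: first at the moved faces, where X is inverted, then at the fixed ones.
  The identity is purely algebraic.
\<close>

lemma complex_pos_iff: "0 < (z::complex) \<longleftrightarrow> (\<exists>r>0. z = complex_of_real r)"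
  by (auto simp: less_complex_def complex_eq_iff)

lemma complex_mult_pos: "0 < (a::complex) \<Longrightarrow> 0 < b \<Longrightarrow> 0 < a * b"
  by (auto simp: complex_pos_iff) (metis mult_pos_pos of_real_mult)

lemma complex_inverse_pos: "0 < (a::complex) \<Longrightarrow> 0 < inverse a"
  by (auto simp: complex_pos_iff) (metis inverse_positive_iff_positive of_real_inverse)

lemma complex_divide_pos: "0 < (a::complex) \<Longrightarrow> 0 < b \<Longrightarrow> 0 < a / b"
  by (simp add: divide_inverse complex_mult_pos complex_inverse_pos)

lemma complex_one_plus_pos: "0 < (a::complex) \<Longrightarrow> 0 < 1 + a"
  by (auto simp: complex_pos_iff) (metis add_pos_pos of_real_1 of_real_add zero_less_one)

lemma quadratic_leading_coeff_unique:
  fixes a b c a' b' c' :: "'a::field_char_0"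
  assumes "\<And>z. a * z\<^sup>2 + b * z + c = a' * z\<^sup>2 + b' * z + c'"
  shows "a = a'"
proof -
  have "2 * a = (a + b + c) + (a - b + c) - 2 * c"
    by (simp add: algebra_simps)
  also have "\<dots> = (a' + b' + c') + (a' - b' + c') - 2 * c'"
    using assms[of 1] assms[of "-1"] assms[of 0] by simp
  also have "\<dots> = 2 * a'"
    by (simp add: algebra_simps)
  finally show ?thesis by simp
qed

definition horizontal_poly :: "(int \<Rightarrow> int \<Rightarrow> complex) \<Rightarrow> int \<Rightarrow> int \<Rightarrow> complex \<Rightarrow> complex" where
  "horizontal_poly u m n z = (u (m+1) n - z) * (u (m-1) n - z)"

definition vertical_poly :: "(int \<Rightarrow> int \<Rightarrow> complex) \<Rightarrow> int \<Rightarrow> int \<Rightarrow> complex \<Rightarrow> complex" where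
  "vertical_poly u m n z = (u m (n+1) - z) * (u m (n-1) - z)"

definition face_ratio :: "(int \<Rightarrow> int \<Rightarrow> complex) \<Rightarrow> int \<Rightarrow> int \<Rightarrow> complex" where
  "face_ratio u m n = - move_ratio u m n (u m n)"

definition face_variable :: "bool \<Rightarrow> (int \<Rightarrow> int \<Rightarrow> complex) \<Rightarrow> int \<Rightarrow> int \<Rightarrow> complex" where
  "face_variable s u m n =
     (if black_face m n = s then face_ratio u m n else inverse (face_ratio u m n))"

definition mutation :: "bool \<Rightarrow> (int \<Rightarrow> int \<Rightarrow> complex) \<Rightarrow> (int \<Rightarrow> int \<Rightarrow> complex) \<Rightarrow> bool" where
  "mutation s u v \<longleftrightarrow>
     (\<forall>m n. black_face m n = s \<longrightarrow> central_move u m n (v m n)) \<and>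
     (\<forall>m n. black_face m n \<noteq> s \<longrightarrow> v m n = u m n)"

lemma move_ratio_polys: "move_ratio u m n z = horizontal_poly u m n z / vertical_poly u m n z"
  by (simp add: move_ratio_def horizontal_poly_def vertical_poly_def)

lemma Xb_eq_face_variable: "Xb = face_variable True"
  and Xw_eq_face_variable: "Xw = face_variable False"
  by (auto simp: fun_eq_iff Xb_def Xw_def face_variable_def face_ratio_def move_ratio_def
      inverse_eq_divide)

lemma black_mutation_eq: "black_mutation = mutation True"
  and white_mutation_eq: "white_mutation = mutation False"
  by (auto simp: fun_eq_iff black_mutation_def white_mutation_def mutation_def)

lemma black_face_neighbours:
  "black_face (m+1) n \<longleftrightarrow> \<not> black_face m n"
  "black_face (m-1) n \<longleftrightarrow> \<not> black_face m n"
  "black_face m (n+1) \<longleftrightarrow> \<not> black_face m n"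
  "black_face m (n-1) \<longleftrightarrow> \<not> black_face m n"
  by (simp_all add: black_face_def algebra_simps)

lemma face_ratio_nonzero_iff:
  "face_ratio u m n \<noteq> 0 \<longleftrightarrow>
     horizontal_poly u m n (u m n) \<noteq> 0 \<and> vertical_poly u m n (u m n) \<noteq> 0"
  by (simp add: face_ratio_def move_ratio_polys)

lemma central_move_avoids_neighbours:
  assumes "central_move u m n w" and "face_ratio u m n \<noteq> 0"
  shows "horizontal_poly u m n w \<noteq> 0" and "vertical_poly u m n w \<noteq> 0"
proof -
  have "move_ratio u m n w \<noteq> 0"
    using assms by (simp add: central_move_def face_ratio_def)
  then show "horizontal_poly u m n w \<noteq> 0" and "vertical_poly u m n w \<noteq> 0"
    by (auto simp: move_ratio_polys)
qed

lemma central_move_factorization: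
  assumes move: "central_move u m n w" and nz: "vertical_poly u m n (u m n) \<noteq> 0"
  shows "1 + face_ratio u m n \<noteq> 0"
    and "horizontal_poly u m n z + face_ratio u m n * vertical_poly u m n z
           = (1 + face_ratio u m n) * (z - u m n) * (z - w)"
proof -
  define c where "c = u m n"
  define N where "N = horizontal_poly u m n c"
  define D where "D = vertical_poly u m n c"
  obtain k where "k \<noteq> 0"
    and k: "\<And>z. horizontal_poly u m n z * D - N * vertical_poly u m n z = k * (z - c) * (z - w)"
    using move unfolding central_move_def c_def N_def D_def horizontal_poly_def vertical_poly_def
    by blast
  have "k = D - N"
  proof (rule quadratic_leading_coeff_unique[symmetric])
    fix z
    show "(D - N) * z\<^sup>2 + ((u m (n+1) + u m (n-1)) * N - (u (m+1) n + u (m-1) n) * D) * z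
          + (u (m+1) n * u (m-1) n * D - u m (n+1) * u m (n-1) * N)
          = k * z\<^sup>2 + (- k * (c + w)) * z + k * c * w"
      using k[of z] by (simp add: horizontal_poly_def vertical_poly_def power2_eq_square algebra_simps)
  qed
  have D: "D \<noteq> 0" using nz by (simp add: D_def c_def)
  have ratio: "face_ratio u m n = - N / D"
    by (simp add: face_ratio_def move_ratio_polys N_def D_def c_def)
  show "1 + face_ratio u m n \<noteq> 0"
    using \<open>k \<noteq> 0\<close> \<open>k = D - N\<close> D by (simp add: ratio field_simps)
  show "horizontal_poly u m n z + face_ratio u m n * vertical_poly u m n z
          = (1 + face_ratio u m n) * (z - u m n) * (z - w)"
    using k[of z] \<open>k = D - N\<close> D by (simp add: ratio c_def field_simps)
qed

lemma face_ratio_after_move: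
  assumes "central_move u m n (v m n)"
    and "v (m+1) n = u (m+1) n" "v (m-1) n = u (m-1) n"
    and "v m (n+1) = u m (n+1)" "v m (n-1) = u m (n-1)"
  shows "face_ratio v m n = face_ratio u m n"
  using assms by (simp add: central_move_def face_ratio_def move_ratio_def)

lemma central_move_at_horizontal_root:
  assumes move: "central_move u m n w" and nz: "face_ratio u m n \<noteq> 0"
    and root: "horizontal_poly u m n z = 0"
  shows "vertical_poly u m n z = (1 + inverse (face_ratio u m n)) * (z - u m n) * (z - w)"
proof -
  have "vertical_poly u m n (u m n) \<noteq> 0" using nz by (simp add: face_ratio_nonzero_iff)
  from central_move_factorization(2)[OF move this, of z] root nz show ?thesis
    by (simp add: field_simps)
qed

lemma central_move_at_vertical_root:
  assumes move: "central_move u m n w" and nz: "face_ratio u m n \<noteq> 0"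
    and root: "vertical_poly u m n z = 0"
  shows "horizontal_poly u m n z = (1 + face_ratio u m n) * (z - u m n) * (z - w)"
proof -
  have "vertical_poly u m n (u m n) \<noteq> 0" using nz by (simp add: face_ratio_nonzero_iff)
  from central_move_factorization(2)[OF move this, of z] root show ?thesis
    by simp
qed

lemma ratio_identity_from_products:
  fixes c u1 u2 u3 u4 w1 w2 w3 w4 X1 X2 X3 X4 :: complex
  assumes prod: "(1 + inverse X1) * (c - u1) * (c - w1) * ((1 + inverse X2) * (c - u2) * (c - w2))
         = (1 + X3) * (c - u3) * (c - w3) * ((1 + X4) * (c - u4) * (c - w4))"
    and nz: "1 + X3 \<noteq> 0" "1 + X4 \<noteq> 0" "c \<noteq> u1" "c \<noteq> u2" "c \<noteq> u3" "c \<noteq> u4"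
      "c \<noteq> w3" "c \<noteq> w4"
  shows "- ((w1 - c) * (w2 - c)) / ((w3 - c) * (w4 - c))
       = inverse (- ((u1 - c) * (u2 - c)) / ((u3 - c) * (u4 - c))) * (1 + X3) * (1 + X4)
         / ((1 + inverse X1) * (1 + inverse X2))"
proof -
  have cross: "- W / W' = inverse (- U / U') * B / A"
    if "A * U * W = B * U' * W'" "A \<noteq> 0" "U \<noteq> 0" "U' \<noteq> 0" "W' \<noteq> 0"
    for A B U U' W W' :: complex
    using that by (simp add: field_simps)
  have "(1 + inverse X1) * (1 + inverse X2) \<noteq> 0"
    using prod nz by auto
  moreover have "(w1 - c) * (w2 - c) = (c - w1) * (c - w2)"
    and "(w3 - c) * (w4 - c) = (c - w3) * (c - w4)"
    and "(u1 - c) * (u2 - c) = (c - u1) * (c - u2)"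
    and "(u3 - c) * (u4 - c) = (c - u3) * (c - u4)"
    by (simp_all add: algebra_simps)
  ultimately show ?thesis
    using cross[of "(1 + inverse X1) * (1 + inverse X2)" "(c - u1) * (c - u2)"
        "(c - w1) * (c - w2)" "(1 + X3) * (1 + X4)" "(c - u3) * (c - u4)" "(c - w3) * (c - w4)"]
      prod nz by (simp add: ac_simps)
qed

lemma face_ratio_at_fixed_face:
  assumes mut: "mutation s u v" and nz: "\<forall>m n. face_ratio u m n \<noteq> 0"
    and fixed: "black_face m n \<noteq> s"
  shows "face_ratio v m n = inverse (face_ratio u m n)
           * (1 + face_ratio u m (n+1)) * (1 + face_ratio u m (n-1))
           / ((1 + inverse (face_ratio u (m+1) n)) * (1 + inverse (face_ratio u (m-1) n)))"
proof -
  define c where "c = u m n"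
  have vc: "v m n = c"
    using mut fixed by (simp add: mutation_def c_def)
  have moved: "central_move u (m+1) n (v (m+1) n)" "central_move u (m-1) n (v (m-1) n)"
    "central_move u m (n+1) (v m (n+1))" "central_move u m (n-1) (v m (n-1))"
    using mut fixed by (simp_all add: mutation_def black_face_neighbours)
  have right: "vertical_poly u (m+1) n c
      = (1 + inverse (face_ratio u (m+1) n)) * (c - u (m+1) n) * (c - v (m+1) n)"
    by (rule central_move_at_horizontal_root[OF moved(1) nz[rule_format]])
      (simp add: horizontal_poly_def c_def)
  have left: "vertical_poly u (m-1) n c
      = (1 + inverse (face_ratio u (m-1) n)) * (c - u (m-1) n) * (c - v (m-1) n)"
    by (rule central_move_at_horizontal_root[OF moved(2) nz[rule_format]])
      (simp add: horizontal_poly_def c_def)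
  have up: "horizontal_poly u m (n+1) c
      = (1 + face_ratio u m (n+1)) * (c - u m (n+1)) * (c - v m (n+1))"
    by (rule central_move_at_vertical_root[OF moved(3) nz[rule_format]])
      (simp add: vertical_poly_def c_def)
  have down: "horizontal_poly u m (n-1) c
      = (1 + face_ratio u m (n-1)) * (c - u m (n-1)) * (c - v m (n-1))"
    by (rule central_move_at_vertical_root[OF moved(4) nz[rule_format]])
      (simp add: vertical_poly_def c_def)
  \<comment> \<open>both sides are the product of the differences to c of the four diagonal centres\<close>
  have diagonal: "vertical_poly u (m+1) n c * vertical_poly u (m-1) n c
      = horizontal_poly u m (n+1) c * horizontal_poly u m (n-1) c"
    by (simp add: horizontal_poly_def vertical_poly_def ac_simps)
  have neighbours_off_centre: "c \<noteq> u (m+1) n" "c \<noteq> u (m-1) n" "c \<noteq> u m (n+1)" "c \<noteq> u m (n-1)"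
    using nz[rule_format, of m n]
    by (auto simp: face_ratio_nonzero_iff horizontal_poly_def vertical_poly_def c_def)
  have "1 + face_ratio u m (n+1) \<noteq> 0" "1 + face_ratio u m (n-1) \<noteq> 0"
    using central_move_factorization(1)[OF moved(3)] central_move_factorization(1)[OF moved(4)]
      nz face_ratio_nonzero_iff by blast+
  moreover have "c \<noteq> v m (n+1)" "c \<noteq> v m (n-1)"
    using central_move_avoids_neighbours(2)[OF moved(3) nz[rule_format]]
      central_move_avoids_neighbours(2)[OF moved(4) nz[rule_format]]
    by (auto simp: vertical_poly_def c_def)
  ultimately have "- ((v (m+1) n - c) * (v (m-1) n - c)) / ((v m (n+1) - c) * (v m (n-1) - c))
      = inverse (- ((u (m+1) n - c) * (u (m-1) n - c)) / ((u m (n+1) - c) * (u m (n-1) - c)))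
        * (1 + face_ratio u m (n+1)) * (1 + face_ratio u m (n-1))
        / ((1 + inverse (face_ratio u (m+1) n)) * (1 + inverse (face_ratio u (m-1) n)))"
    using ratio_identity_from_products diagonal neighbours_off_centre
    unfolding right left up down by blast
  then show ?thesis
    by (simp add: face_ratio_def move_ratio_def vc c_def)
qed

lemma face_variable_after_mutation:
  assumes mut: "mutation s u v" and nz: "\<forall>m n. face_ratio u m n \<noteq> 0"
  shows "face_variable (\<not> s) v m n =
           (if black_face m n = s then inverse (face_variable s u m n)
            else face_variable s u m n * (1 + face_variable s u m (n+1)) * (1 + face_variable s u m (n-1))
                 / ((1 + inverse (face_variable s u (m+1) n)) * (1 + inverse (face_variable s u (m-1) n))))"
proof (cases "black_face m n = s")
  case True
  then have "face_ratio v m n = face_ratio u m n"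
    using mut by (intro face_ratio_after_move) (simp_all add: mutation_def black_face_neighbours)
  with True show ?thesis
    by (simp add: face_variable_def)
next
  case False
  with face_ratio_at_fixed_face[OF mut nz False] show ?thesis
    by (simp add: face_variable_def black_face_neighbours)
qed

lemma mutation_formula_preserves_positivity:
  fixes X Y :: "int \<Rightarrow> int \<Rightarrow> complex"
  assumes Y: "\<And>m n. Y m n =
           (if black_face m n = s then inverse (X m n)
            else X m n * (1 + X m (n+1)) * (1 + X m (n-1))
                 / ((1 + inverse (X (m+1) n)) * (1 + inverse (X (m-1) n))))"
  shows "(\<forall>m n. 0 < X m n) \<longleftrightarrow> (\<forall>m n. 0 < Y m n)"
proof
  assume "\<forall>m n. 0 < X m n"
  then show "\<forall>m n. 0 < Y m n"
    by (auto simp: Y intro!: complex_mult_pos complex_divide_pos complex_one_plus_pos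
        complex_inverse_pos)
next
  assume Ypos: "\<forall>m n. 0 < Y m n"
  have moved: "0 < X m n" if "black_face m n = s" for m n
    using complex_inverse_pos[OF Ypos[rule_format, of m n]] that by (simp add: Y)
  show "\<forall>m n. 0 < X m n"
  proof (intro allI)
    fix m n
    show "0 < X m n"
    proof (cases "black_face m n = s")
      case True
      then show ?thesis by (rule moved)
    next
      case False
      then have nbrs: "0 < X (m+1) n" "0 < X (m-1) n" "0 < X m (n+1)" "0 < X m (n-1)"
        by (auto intro: moved simp: black_face_neighbours)
      define A where "A = (1 + X m (n+1)) * (1 + X m (n-1))"
      define B where "B = (1 + inverse (X (m+1) n)) * (1 + inverse (X (m-1) n))"
      have "0 < A" "0 < B"
        unfolding A_def B_def
        by (intro complex_mult_pos complex_one_plus_pos complex_inverse_pos nbrs)+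
      have "Y m n = X m n * A / B"
        using False by (simp add: Y A_def B_def mult.assoc)
      with \<open>0 < A\<close> \<open>0 < B\<close> have "X m n = Y m n * B / A"
        by (auto simp: field_simps)
      then show ?thesis
        using Ypos \<open>0 < A\<close> \<open>0 < B\<close> by (simp add: complex_divide_pos complex_mult_pos)
    qed
  qed
qed

theorem mainTheorem12:
  fixes u :: "int \<Rightarrow> int \<Rightarrow> complex"
  assumes cp: "circle_pattern u"
    and nz: "\<forall>m n. Xb u m n \<noteq> 0"
  shows
    "(\<forall>v. black_mutation u v \<longrightarrow>
        (\<forall>m n. Xw v m n =
           (if black_face m n then inverse (Xb u m n)
            else Xb u m n * (1 + Xb u m (n+1)) * (1 + Xb u m (n-1))
                 / ((1 + inverse (Xb u (m+1) n)) * (1 + inverse (Xb u (m-1) n))))) \<and>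
        ((\<forall>m n. 0 < Xb u m n) \<longleftrightarrow> (\<forall>m n. 0 < Xw v m n)))
   \<and>
    (\<forall>v. white_mutation u v \<longrightarrow>
        (\<forall>m n. Xb v m n =
           (if \<not> black_face m n then inverse (Xw u m n)
            else Xw u m n * (1 + Xw u m (n+1)) * (1 + Xw u m (n-1))
                 / ((1 + inverse (Xw u (m+1) n)) * (1 + inverse (Xw u (m-1) n))))) \<and>
        ((\<forall>m n. 0 < Xw u m n) \<longleftrightarrow> (\<forall>m n. 0 < Xb v m n)))"
proof -
  have "\<forall>m n. face_ratio u m n \<noteq> 0"
    using nz by (auto simp: Xb_eq_face_variable face_variable_def split: if_splits)
  note formula = face_variable_after_mutation[OF _ this]
  note positivity = mutation_formula_preserves_positivity[OF formula]
  show ?thesis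
    unfolding black_mutation_eq white_mutation_eq Xb_eq_face_variable Xw_eq_face_variable
    using formula[where s = True] formula[where s = False]
      positivity[where s = True] positivity[where s = False]
    by simp
qed

end
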